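(* Let $T\subseteq\mathbb{R}^n$ be an action set. Then $\dim T+\dim\mathbf{W}(T)=n$, where $\mathbf{W}(T)=\bigcap_{t\in T}\mathbf{W}(t)$.
   Context: Single-commodity network pricing setting: $G=(\mathcal{V},\mathcal{A})$ directed graph, arc costs $c\ge0$, nonempty tolled arc set $\mathcal{A}_1\subsetneq\mathcal{A}$, $n=|\mathcal{A}_1|$, $N$ node–arc incidence matrix, single origin $o$ and destination $d$ connected by a toll-free path, $b_o=1$, $b_d=-1$, $b_i=0$ otherwise, $\mathcal{X}=\{x\in\mathbb{R}^{\mathcal{A}}: Nx=b,\ x\ge0\}$, $x_{\mathcal{A}_1}$ the restriction of $x$ to $\mathcal{A}_1$. Let $f(t)=\min\{c^\top x+t^\top x_{\mathcal{A}_1}: x\in\mathcal{X}\}$ for $t\in\mathbb{R}^n$, $t\ge0$, and $f(t)=-\infty$ otherwise. An action set is a set $T=\{t:(t,z)\in F\text{ for some }z\}$ where $F$ is a face of $\operatorname{epi}(-f)$ whose affine hull's direction space does not contain $(0,1)$. For $t\ge0$, $\mathbf{W}(t)$ is the set of $w$ such that $(w,x)$ is optimal for some $x$ in $\min_{w,x}\{c^\top x+t^\top w: x_{\mathcal{A}_1}\le w,\ Nx=b,\ w\ge0,\ x\ge0\}$. $\dim$ denotes the dimension of the affine hull. *)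

theory Defs
  imports "HOL-Analysis.Analysis" "HOL-Library.Extended_Real"
begin

(* Arcs have type 'k + 'u: tolled arcs A1 = Inl ` UNIV (n = CARD('k)),
   toll-free arcs Inr ` UNIV. *)

definition node_supply :: "'v \<Rightarrow> 'v \<Rightarrow> 'v \<Rightarrow> real" where
  "node_supply o' d i = (if i = o' then 1 else if i = d then -1 else 0)"

definition incid :: "(('k + 'u) \<Rightarrow> 'v) \<Rightarrow> (('k + 'u) \<Rightarrow> 'v) \<Rightarrow>
    (('k + 'u::finite) \<Rightarrow> real) \<Rightarrow> 'v \<Rightarrow> real" where
  "incid tailf headf x i = (\<Sum>a\<in>{a. tailf a = i}. x a) - (\<Sum>a\<in>{a. headf a = i}. x a)"

definition flows :: "(('k + 'u) \<Rightarrow> 'v) \<Rightarrow> (('k + 'u) \<Rightarrow> 'v) \<Rightarrow> 'v \<Rightarrow> 'v \<Rightarrow>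
    (('k + 'u::finite) \<Rightarrow> real) set" where
  "flows tailf headf o' d = {x. (\<forall>i. incid tailf headf x i = node_supply o' d i) \<and> (\<forall>a. 0 \<le> x a)}"

definition costc :: "(('k + 'u::finite) \<Rightarrow> real) \<Rightarrow> (('k + 'u) \<Rightarrow> real) \<Rightarrow> real" where
  "costc c x = (\<Sum>a\<in>UNIV. c a * x a)"

definition tollc :: "real ^ ('k::finite) \<Rightarrow> (('k + 'u) \<Rightarrow> real) \<Rightarrow> real" where
  "tollc t x = (\<Sum>k\<in>UNIV. t $ k * x (Inl k))"

definition fval :: "(('k + 'u) \<Rightarrow> 'v) \<Rightarrow> (('k + 'u) \<Rightarrow> 'v) \<Rightarrow> 'v \<Rightarrow> 'v \<Rightarrow>
    (('k::finite + 'u::finite) \<Rightarrow> real) \<Rightarrow> real ^ 'k \<Rightarrow> ereal" where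
  "fval tailf headf o' d c t =
     (if (\<forall>k. 0 \<le> t $ k)
      then Inf {ereal (costc c x + tollc t x) | x. x \<in> flows tailf headf o' d}
      else -\<infinity>)"

definition epi_negf :: "(('k + 'u) \<Rightarrow> 'v) \<Rightarrow> (('k + 'u) \<Rightarrow> 'v) \<Rightarrow> 'v \<Rightarrow> 'v \<Rightarrow>
    (('k::finite + 'u::finite) \<Rightarrow> real) \<Rightarrow> ((real ^ 'k) \<times> real) set" where
  "epi_negf tailf headf o' d c = {(t, z). - fval tailf headf o' d c t \<le> ereal z}"

definition aff_dir :: "'a::real_vector set \<Rightarrow> 'a set" where
  "aff_dir S = span {x - y | x y. x \<in> S \<and> y \<in> S}"

definition action_set :: "(('k + 'u) \<Rightarrow> 'v) \<Rightarrow> (('k + 'u) \<Rightarrow> 'v) \<Rightarrow> 'v \<Rightarrow> 'v \<Rightarrow>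
    (('k::finite + 'u::finite) \<Rightarrow> real) \<Rightarrow> (real ^ 'k) set \<Rightarrow> bool" where
  "action_set tailf headf o' d c T \<longleftrightarrow>
     (\<exists>F. F face_of epi_negf tailf headf o' d c \<and> F \<noteq> {} \<and>
          (0, 1) \<notin> aff_dir F \<and> T = fst ` F)"

definition feasWX :: "(('k + 'u) \<Rightarrow> 'v) \<Rightarrow> (('k + 'u) \<Rightarrow> 'v) \<Rightarrow> 'v \<Rightarrow> 'v \<Rightarrow>
    ((real ^ ('k::finite)) \<times> (('k + 'u::finite) \<Rightarrow> real)) set" where
  "feasWX tailf headf o' d = {(w, x). (\<forall>k. x (Inl k) \<le> w $ k) \<and> x \<in> flows tailf headf o' d \<and>
                                 (\<forall>k. 0 \<le> w $ k)}"

definition Wset :: "(('k + 'u) \<Rightarrow> 'v) \<Rightarrow> (('k + 'u) \<Rightarrow> 'v) \<Rightarrow> 'v \<Rightarrow> 'v \<Rightarrow>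
    (('k::finite + 'u::finite) \<Rightarrow> real) \<Rightarrow> real ^ 'k \<Rightarrow> (real ^ 'k) set" where
  "Wset tailf headf o' d c t = {w. \<exists>x. (w, x) \<in> feasWX tailf headf o' d \<and>
      (\<forall>(w', x') \<in> feasWX tailf headf o' d.
          costc c x + inner t w \<le> costc c x' + inner t w')}"

end

theory Submission
  imports Defs
begin

text \<open>
  The optimal value val t = min {t \<bullet> w + c \<bullet> x | (w, x) \<in> P} of a linear program over a
  polyhedron P is concave in t, and a non-vertical face F of the epigraph of -val is the graph
  of -val over T = fst ` F, on which val is affine.  For t0 in the relative interior of T, every
  minimiser at t0 therefore remains a minimiser on all of T, so W(T) = W(t0), and
  val t - val t0 = (t - t0) \<bullet> w for all w in W(t0): the directions of T are orthogonal to
  those of W(t0).  Conversely, the minimiser set of a linear program over a polyhedron is stable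
  under small perturbations of the objective orthogonal to it, so for small u orthogonal to W(t0)
  the point (t0, -val t0) is the midpoint of two points of the epigraph over t0 \<plusminus> u, and the
  face property puts t0 + u into T.  Hence the direction space of T is exactly the orthogonal
  complement of that of W(t0).  The network pricing problem is such a linear program, with P the
  pairs (w, x) of a unit o-d flow x and a bound w \<ge> x on its tolled arcs; its optimal value is
  f(t) for t \<ge> 0, and there is no minimiser otherwise.
\<close>

section \<open>Faces of epigraphs and complementary affine dimensions\<close>

lemma nonvertical_face_of_epigraph:
  fixes g :: "'a::real_vector \<Rightarrow> real"
  assumes face: "F face_of {(t, z). t \<in> D \<and> g t \<le> z}" and "(0, 1) \<notin> aff_dir F"
    and tz: "(t, z) \<in> F"
  shows "t \<in> D \<and> z = g t"
proof -
  have "t \<in> D" "g t \<le> z"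
    using face_of_imp_subset[OF face] tz by auto
  moreover have "\<not> g t < z"
  proof
    assume "g t < z"
    define a where "a = (t, g t)"
    define b where "b = (t, 2 * z - g t)"
    have "(t, z) \<in> open_segment a b"
    proof -
      have "midpoint a b = (t, z)"
        by (simp add: a_def b_def midpoint_def scaleR_2[symmetric])
      moreover have "a \<noteq> b"
        using \<open>g t < z\<close> by (simp add: a_def b_def)
      ultimately show ?thesis
        using midpoint_in_open_segment by metis
    qed
    moreover have "a \<in> {(t, z). t \<in> D \<and> g t \<le> z}" "b \<in> {(t, z). t \<in> D \<and> g t \<le> z}"
      using \<open>t \<in> D\<close> \<open>g t < z\<close> by (simp_all add: a_def b_def)
    ultimately have "a \<in> F"
      using face tz unfolding face_of_def by blast
    then have "(t, z) - a \<in> aff_dir F"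
      unfolding aff_dir_def using tz by (intro span_base) blast
    then have "(1 / (z - g t)) *\<^sub>R ((t, z) - a) \<in> aff_dir F"
      unfolding aff_dir_def by (rule span_mul)
    moreover have "(1 / (z - g t)) *\<^sub>R ((t, z) - a) = (0, 1)"
      using \<open>g t < z\<close> by (simp add: a_def)
    ultimately show False
      using \<open>(0, 1) \<notin> aff_dir F\<close> by simp
  qed
  ultimately show ?thesis by simp
qed

lemma subspace_subset_span_if_ball_subset:
  assumes "subspace U" "\<kappa> > 0" and small: "\<And>u. u \<in> U \<Longrightarrow> norm u < \<kappa> \<Longrightarrow> u \<in> A"
  shows "U \<subseteq> span A"
proof
  fix y assume "y \<in> U"
  show "y \<in> span A"
  proof (cases "y = 0")
    case False
    define u where "u = (\<kappa> / (2 * norm y)) *\<^sub>R y"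
    have "u \<in> A"
      using False \<open>y \<in> U\<close> \<open>\<kappa> > 0\<close>
      by (intro small) (simp_all add: u_def subspace_scale[OF \<open>subspace U\<close>])
    then have "((2 * norm y) / \<kappa>) *\<^sub>R u \<in> span A"
      by (intro span_mul span_base)
    moreover have "((2 * norm y) / \<kappa>) *\<^sub>R u = y"
      using False \<open>\<kappa> > 0\<close> by (simp add: u_def)
    ultimately show ?thesis by simp
  qed (simp add: span_zero)
qed

lemma aff_dim_add_aff_dim_orthogonal:
  fixes T G :: "'a::euclidean_space set"
  assumes "t0 \<in> T" "g0 \<in> G"
    and orth: "\<And>t g. t \<in> T \<Longrightarrow> g \<in> G \<Longrightarrow> (t - t0) \<bullet> (g - g0) = 0"
    and "\<kappa> > 0"
    and full: "\<And>u. (\<And>g. g \<in> G \<Longrightarrow> u \<bullet> (g - g0) = 0) \<Longrightarrow> norm u < \<kappa> \<Longrightarrow> t0 + u \<in> T"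
  shows "aff_dim T + aff_dim G = DIM('a)"
proof -
  define T' where "T' = (\<lambda>t. t - t0) ` T"
  define G' where "G' = (\<lambda>g. g - g0) ` G"
  define U where "U = {y. \<forall>x \<in> span G'. orthogonal x y}"
  have "T' \<subseteq> U"
  proof
    fix y assume "y \<in> T'"
    then obtain t where "t \<in> T" "y = t - t0"
      by (auto simp: T'_def)
    have "orthogonal y x" if "x \<in> span G'" for x
      by (rule orthogonal_to_span[OF that])
        (auto simp: G'_def orthogonal_def orth \<open>t \<in> T\<close> \<open>y = t - t0\<close>)
    then show "y \<in> U"
      by (simp add: U_def orthogonal_commute)
  qed
  moreover have "U \<subseteq> span T'"
  proof (rule subspace_subset_span_if_ball_subset[OF _ \<open>\<kappa> > 0\<close>])
    show "subspace U"
      unfolding U_def by (rule subspace_orthogonal_to_vectors)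
    fix u assume "u \<in> U" "norm u < \<kappa>"
    have "u \<bullet> (g - g0) = 0" if "g \<in> G" for g
      using \<open>u \<in> U\<close> span_base[of "g - g0" G'] that
      by (auto simp: U_def G'_def orthogonal_def inner_commute)
    then have "t0 + u \<in> T"
      using \<open>norm u < \<kappa>\<close> by (rule full)
    then show "u \<in> T'"
      unfolding T'_def by (intro image_eqI[where x = "t0 + u"]) simp_all
  qed
  ultimately have "dim T' = dim U"
    using dim_subset[of T' U] dim_subset[of U "span T'"] by (simp add: dim_span)
  moreover have "dim U + dim G' = DIM('a)"
    using dim_subspace_orthogonal_to_vectors[OF subspace_span subspace_UNIV subset_UNIV, of G']
    by (simp add: U_def dim_span)
  moreover have "aff_dim T = dim T'"
    unfolding T'_def by (rule aff_dim_eq_dim_subtract[OF hull_inc[OF \<open>t0 \<in> T\<close>]])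
  moreover have "aff_dim G = dim G'"
    unfolding G'_def by (rule aff_dim_eq_dim_subtract[OF hull_inc[OF \<open>g0 \<in> G\<close>]])
  ultimately show ?thesis
    by simp
qed


section \<open>Linear programs over polyhedra\<close>

definition lp_argmin :: "'a::real_inner set \<Rightarrow> 'a \<Rightarrow> 'a set" where
  "lp_argmin S v = {h \<in> S. \<forall>y\<in>S. v \<bullet> h \<le> v \<bullet> y}"

definition lp_min :: "'a::real_inner set \<Rightarrow> 'a \<Rightarrow> real" where
  "lp_min S v = Inf ((\<lambda>y. v \<bullet> y) ` S)" \<comment> \<open>meaningful only if the minimum is attained\<close>

lemma lp_min_eq:
  assumes "h \<in> lp_argmin S v"
  shows "lp_min S v = v \<bullet> h"
  using assms unfolding lp_min_def lp_argmin_def by (intro cInf_eq_minimum) auto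

lemma lp_min_le:
  assumes "lp_argmin S v \<noteq> {}" "y \<in> S"
  shows "lp_min S v \<le> v \<bullet> y"
proof -
  obtain h where "h \<in> lp_argmin S v" using assms(1) by blast
  then show ?thesis using assms(2) lp_min_eq[of h] by (auto simp: lp_argmin_def)
qed

lemma convex_lp_argmin:
  assumes "convex S"
  shows "convex (lp_argmin S v)"
proof (cases "lp_argmin S v = {}")
  case False
  then obtain h where h: "h \<in> lp_argmin S v" by blast
  then have "lp_argmin S v = S \<inter> {x. v \<bullet> x \<le> v \<bullet> h}"
    by (auto simp: lp_argmin_def intro: order_trans)
  then show ?thesis
    using assms by (simp add: convex_Int convex_halfspace_le)
qed simp

lemma lp_argmin_of_convex_combination:
  assumes "0 < l" "l < 1" and h: "h \<in> lp_argmin S (l *\<^sub>R v1 + (1 - l) *\<^sub>R v2)"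
    and ne: "lp_argmin S v1 \<noteq> {}" "lp_argmin S v2 \<noteq> {}"
    and min: "lp_min S (l *\<^sub>R v1 + (1 - l) *\<^sub>R v2) = l * lp_min S v1 + (1 - l) * lp_min S v2"
  shows "h \<in> lp_argmin S v2"
proof -
  have "h \<in> S"
    using h by (simp add: lp_argmin_def)
  have "l * (v1 \<bullet> h - lp_min S v1) + (1 - l) * (v2 \<bullet> h - lp_min S v2) = 0"
    using lp_min_eq[OF h] min by (simp add: inner_add_left algebra_simps)
  moreover have "0 \<le> l * (v1 \<bullet> h - lp_min S v1)" "0 \<le> (1 - l) * (v2 \<bullet> h - lp_min S v2)"
    using lp_min_le[OF ne(1) \<open>h \<in> S\<close>] lp_min_le[OF ne(2) \<open>h \<in> S\<close>] \<open>0 < l\<close> \<open>l < 1\<close> by simp_all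
  ultimately have "v2 \<bullet> h = lp_min S v2"
    using \<open>l < 1\<close> by (simp add: add_nonneg_eq_0_iff)
  with \<open>h \<in> S\<close> show ?thesis
    using lp_min_le[OF ne(2)] by (simp add: lp_argmin_def)
qed

lemma lp_min_diff_of_common_component:
  fixes P :: "('a::real_inner \<times> 'b::real_inner) set"
  assumes "(w, y1) \<in> lp_argmin P (t1, c)" "(w, y2) \<in> lp_argmin P (t2, c)"
  shows "lp_min P (t1, c) - lp_min P (t2, c) = (t1 - t2) \<bullet> w"
proof -
  have "(t1, c) \<bullet> (w, y1) \<le> (t1, c) \<bullet> (w, y2)" "(t2, c) \<bullet> (w, y2) \<le> (t2, c) \<bullet> (w, y1)"
    using assms unfolding lp_argmin_def by blast+
  then have "c \<bullet> y1 = c \<bullet> y2"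
    by simp
  then show ?thesis
    using lp_min_eq[OF assms(1)] lp_min_eq[OF assms(2)] by (simp add: inner_diff_left)
qed

lemma polyhedron_obtain_constraints:
  fixes S :: "'a::euclidean_space set"
  assumes "polyhedron S"
  obtains I :: "'a set set" and a :: "'a set \<Rightarrow> 'a" and b
  where "finite I" "S = {x. \<forall>i\<in>I. a i \<bullet> x \<le> b i}"
proof -
  obtain I where "finite I" "S = \<Inter>I" and "\<forall>h\<in>I. \<exists>a b. a \<noteq> 0 \<and> h = {x. a \<bullet> x \<le> b}"
    using assms unfolding polyhedron_def by blast
  then obtain a b where "\<And>h. h \<in> I \<Longrightarrow> h = {x. a h \<bullet> x \<le> b h}"
    by metis
  with \<open>S = \<Inter>I\<close> have "S = {x. \<forall>h\<in>I. a h \<bullet> x \<le> b h}"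
    by auto
  with \<open>finite I\<close> show ?thesis by (rule that)
qed

lemma polyhedron_descent_to_proper_face:
  fixes S :: "'a::euclidean_space set"
  assumes "polyhedron S" "y \<in> S" "y' \<in> S" "v \<bullet> y' < v \<bullet> y"
    and bdd: "\<And>x. x \<in> S \<Longrightarrow> m \<le> v \<bullet> x"
  obtains F p where "F face_of S" "F \<noteq> S" "p \<in> F" "v \<bullet> p \<le> v \<bullet> y"
proof -
  define d where "d = y' - y"
  have "v \<bullet> d < 0"
    using assms(4) by (simp add: d_def inner_diff_right)
  define R where "R = (\<lambda>s. y + s *\<^sub>R d) -` S"
  have "1 \<in> R"
    using assms(3) by (simp add: R_def d_def)
  have "closed R"
    unfolding R_def using polyhedron_imp_closed[OF \<open>polyhedron S\<close>]
    by (intro continuous_closed_vimage) (auto intro!: continuous_intros)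
  moreover have "bdd_above R"
  proof
    fix s assume "s \<in> R"
    then have "m \<le> v \<bullet> y + s * (v \<bullet> d)"
      using bdd by (force simp: R_def inner_add_right)
    then show "s \<le> (m - v \<bullet> y) / (v \<bullet> d)"
      using \<open>v \<bullet> d < 0\<close> by (simp add: neg_le_divide_eq algebra_simps)
  qed
  ultimately have "Sup R \<in> R" and Sup_max: "\<And>s. s \<in> R \<Longrightarrow> s \<le> Sup R"
    using \<open>1 \<in> R\<close> closed_contains_Sup cSup_upper by blast+
  define p where "p = y + Sup R *\<^sub>R d"
  have "p \<in> S" "Sup R \<ge> 1"
    using \<open>Sup R \<in> R\<close> Sup_max[OF \<open>1 \<in> R\<close>] by (simp_all add: R_def p_def)
  \<comment> \<open>the last point of S on the ray from y through y' lies on the relative frontier\<close>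
  have "p \<notin> rel_interior S"
  proof
    assume "p \<in> rel_interior S"
    then obtain e where "e > 1" and "(1 - e) *\<^sub>R y + e *\<^sub>R p \<in> S"
      using convex_rel_interior_if2[OF polyhedron_imp_convex[OF \<open>polyhedron S\<close>]]
        hull_inc[OF \<open>y \<in> S\<close>] by blast
    moreover have "(1 - e) *\<^sub>R y + e *\<^sub>R p = y + (e * Sup R) *\<^sub>R d"
      by (simp add: p_def algebra_simps)
    ultimately have "e * Sup R \<le> 1 * Sup R"
      using Sup_max by (simp add: R_def)
    with \<open>e > 1\<close> \<open>Sup R \<ge> 1\<close> show False
      by (simp add: mult_le_cancel_right)
  qed
  with \<open>p \<in> S\<close> obtain F where "F face_of S" "F \<noteq> S" "p \<in> F"
    using rel_frontier_of_polyhedron_alt[OF \<open>polyhedron S\<close>]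
      polyhedron_imp_closed[OF \<open>polyhedron S\<close>] by (auto simp: rel_frontier_def)
  moreover have "v \<bullet> p \<le> v \<bullet> y"
    using \<open>v \<bullet> d < 0\<close> \<open>Sup R \<ge> 1\<close> by (simp add: p_def inner_add_right mult_nonneg_nonpos)
  ultimately show ?thesis
    using that by blast
qed

lemma polyhedron_lp_argmin_nonempty_if_faces:
  fixes S :: "'a::euclidean_space set"
  assumes "polyhedron S" "S \<noteq> {}" and bdd: "\<And>x. x \<in> S \<Longrightarrow> m \<le> v \<bullet> x"
    and faces: "\<And>F. F face_of S \<Longrightarrow> F \<noteq> S \<Longrightarrow> F \<noteq> {} \<Longrightarrow> lp_argmin F v \<noteq> {}"
  shows "lp_argmin S v \<noteq> {}"
proof
  assume empty: "lp_argmin S v = {}"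
  define Fs where "Fs = {F. F face_of S \<and> F \<noteq> S \<and> F \<noteq> {}}"
  have "finite Fs"
    using finite_polyhedron_faces[OF \<open>polyhedron S\<close>] by (simp add: Fs_def)
  have below: "\<exists>F\<in>Fs. lp_min F v \<le> v \<bullet> y" if "y \<in> S" for y
  proof -
    obtain y' where "y' \<in> S" "v \<bullet> y' < v \<bullet> y"
      using empty \<open>y \<in> S\<close> by (force simp: lp_argmin_def)
    then obtain F p where "F face_of S" "F \<noteq> S" "p \<in> F" "v \<bullet> p \<le> v \<bullet> y"
      using polyhedron_descent_to_proper_face[OF \<open>polyhedron S\<close> \<open>y \<in> S\<close> _ _ bdd] by blast
    moreover have "lp_min F v \<le> v \<bullet> p"
      using faces lp_min_le calculation by blast
    ultimately show ?thesis
      by (force simp: Fs_def)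
  qed
  then have "Fs \<noteq> {}"
    using \<open>S \<noteq> {}\<close> by blast
  \<comment> \<open>every point of S is undercut by a proper face, so the least face minimum is global\<close>
  define F0 where "F0 = arg_min_on (\<lambda>F. lp_min F v) Fs"
  have "F0 \<in> Fs"
    unfolding F0_def using arg_min_if_finite(1)[OF \<open>finite Fs\<close> \<open>Fs \<noteq> {}\<close>] .
  then obtain h where h: "h \<in> lp_argmin F0 v" "F0 face_of S"
    using faces by (auto simp: Fs_def)
  have "h \<in> S"
    using h face_of_imp_subset by (fastforce simp: lp_argmin_def)
  moreover have "v \<bullet> h \<le> v \<bullet> y" if y: "y \<in> S" for y
  proof -
    obtain F where "F \<in> Fs" "lp_min F v \<le> v \<bullet> y"
      using below[OF y] by blast
    moreover have "lp_min F0 v \<le> lp_min F v"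
      unfolding F0_def using arg_min_least[OF \<open>finite Fs\<close> \<open>Fs \<noteq> {}\<close> \<open>F \<in> Fs\<close>] .
    ultimately show ?thesis
      using lp_min_eq[OF h(1)] by linarith
  qed
  ultimately have "h \<in> lp_argmin S v"
    by (simp add: lp_argmin_def)
  with empty show False by simp
qed

lemma polyhedron_lp_argmin_nonempty:
  fixes S :: "'a::euclidean_space set"
  assumes "polyhedron S" "S \<noteq> {}" "\<And>x. x \<in> S \<Longrightarrow> m \<le> v \<bullet> x"
  shows "lp_argmin S v \<noteq> {}"
  using assms
proof (induction "nat (aff_dim S)" arbitrary: S rule: less_induct)
  case less
  show ?case
  proof (rule polyhedron_lp_argmin_nonempty_if_faces[OF less.prems])
    fix F assume F: "F face_of S" "F \<noteq> S" "F \<noteq> {}"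
    then have "aff_dim F < aff_dim S" "0 \<le> aff_dim F"
      using face_of_aff_dim_lt[OF polyhedron_imp_convex[OF less.prems(1)]]
        aff_dim_negative_iff[of F]
      by (auto simp del: aff_dim_negative_iff)
    then have "nat (aff_dim F) < nat (aff_dim S)"
      by simp
    moreover have "polyhedron F"
      using face_of_polyhedron_polyhedron[OF less.prems(1) F(1)] .
    moreover have "\<And>x. x \<in> F \<Longrightarrow> m \<le> v \<bullet> x"
      using less.prems(3) face_of_imp_subset[OF F(1)] by blast
    ultimately show "lp_argmin F v \<noteq> {}"
      using less.hyps F(3) by blast
  qed
qed

lemma feasible_direction_of_active_constraints:
  assumes "finite I" and h0: "\<forall>i\<in>I. a i \<bullet> h0 \<le> b i"
    and active: "\<And>i. i \<in> I \<Longrightarrow> a i \<bullet> h0 = b i \<Longrightarrow> a i \<bullet> d \<le> 0"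
  shows "\<exists>s>0. \<forall>i\<in>I. a i \<bullet> (h0 + s *\<^sub>R d) \<le> b i"
proof -
  have "\<forall>\<^sub>F s in at_right 0. a i \<bullet> (h0 + s *\<^sub>R d) \<le> b i" if "i \<in> I" for i
  proof (cases "a i \<bullet> h0 = b i")
    case True
    have "a i \<bullet> (h0 + s *\<^sub>R d) \<le> b i" if "0 < s" for s
      using active[OF \<open>i \<in> I\<close> True] \<open>0 < s\<close> True
      by (simp add: inner_add_right mult_nonneg_nonpos)
    then show ?thesis
      by (rule eventually_mono[OF eventually_at_right_less])
  next
    case False
    with that h0 have "a i \<bullet> h0 < b i" by force
    moreover have "((\<lambda>s. a i \<bullet> (h0 + s *\<^sub>R d)) \<longlongrightarrow> a i \<bullet> (h0 + 0 *\<^sub>R d)) (at_right 0)"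
      by (intro tendsto_intros)
    ultimately have "\<forall>\<^sub>F s in at_right 0. a i \<bullet> (h0 + s *\<^sub>R d) < b i"
      by (auto elim: order_tendstoD(2)[rotated])
    then show ?thesis
      by (rule eventually_mono) simp
  qed
  then have "\<forall>\<^sub>F s in at_right 0. \<forall>i\<in>I. a i \<bullet> (h0 + s *\<^sub>R d) \<le> b i"
    using \<open>finite I\<close> by (simp add: eventually_ball_finite)
  then have "\<forall>\<^sub>F s in at_right 0. 0 < s \<and> (\<forall>i\<in>I. a i \<bullet> (h0 + s *\<^sub>R d) \<le> b i)"
    by (intro eventually_conj eventually_at_right_less)
  then obtain s where "0 < s" "\<forall>i\<in>I. a i \<bullet> (h0 + s *\<^sub>R d) \<le> b i"
    using eventually_happens'[OF trivial_limit_at_right_real] by blast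
  then show ?thesis by blast
qed

lemma conic_closed_linear_lower_bound:
  fixes K :: "'a::euclidean_space set"
  assumes "closed K" "conic K" and pos: "\<And>q. q \<in> K \<Longrightarrow> q \<noteq> 0 \<Longrightarrow> 0 < v \<bullet> q"
  shows "\<exists>\<kappa>>0. \<forall>q\<in>K. \<kappa> * norm q \<le> v \<bullet> q"
proof -
  have unit: "q /\<^sub>R norm q \<in> K \<inter> sphere 0 1" if "q \<in> K" "q \<noteq> 0" for q
    using that conicD[OF \<open>conic K\<close>] by simp
  obtain \<kappa> where "\<kappa> > 0" and \<kappa>: "\<And>u. u \<in> K \<inter> sphere 0 1 \<Longrightarrow> \<kappa> \<le> v \<bullet> u"
  proof (cases "K \<inter> sphere 0 1 = {}")
    case True
    then show ?thesis by (intro that[of 1]) auto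
  next
    case False
    have "compact (K \<inter> sphere 0 1)"
      using \<open>closed K\<close> by (simp add: closed_Int_compact)
    moreover have "continuous_on (K \<inter> sphere 0 1) (\<lambda>u. v \<bullet> u)"
      by (intro continuous_intros)
    ultimately obtain u0 where "u0 \<in> K \<inter> sphere 0 1" "\<forall>u \<in> K \<inter> sphere 0 1. v \<bullet> u0 \<le> v \<bullet> u"
      using continuous_attains_inf[OF _ False] by blast
    moreover have "u0 \<noteq> 0"
      using \<open>u0 \<in> K \<inter> sphere 0 1\<close> by auto
    ultimately show ?thesis
      using pos by (intro that[of "v \<bullet> u0"]) auto
  qed
  moreover have "\<kappa> * norm q \<le> v \<bullet> q" if "q \<in> K" for q
  proof (cases "q = 0")
    case False
    then have "\<kappa> \<le> (v \<bullet> q) / norm q"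
      using \<kappa>[OF unit[OF that False]] by (simp add: divide_inverse_commute)
    with False show ?thesis by (simp add: pos_le_divide_eq)
  qed simp
  ultimately show ?thesis by blast
qed

lemma rel_interior_inner_span_eq_0:
  fixes H :: "'a::euclidean_space set"
  assumes h0: "h0 \<in> rel_interior H" and le: "\<And>h. h \<in> H \<Longrightarrow> f \<bullet> h \<le> f \<bullet> h0"
    and p: "p \<in> span ((\<lambda>h. h - h0) ` H)"
  shows "f \<bullet> p = 0"
proof -
  obtain e where "e > 0" and e: "cball h0 e \<inter> affine hull H \<subseteq> H"
    using h0 mem_rel_interior_cball by blast
  have h0H: "h0 \<in> affine hull H"
    using hull_inc[OF subsetD[OF rel_interior_subset h0]] .
  define s where "s = e / (norm p + 1)"
  have "norm p + 1 > 0"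
    using norm_ge_zero[of p] by linarith
  then have "s > 0"
    unfolding s_def using \<open>e > 0\<close> by simp
  have move: "h0 + q \<in> H" if "q \<in> span ((\<lambda>h. h - h0) ` H)" "norm q \<le> e" for q
  proof -
    have "(\<lambda>h. h - h0) = (\<lambda>x. - h0 + x)"
      by (rule ext) simp
    with that(1) have "h0 + q \<in> (\<lambda>x. h0 + x) ` span ((\<lambda>x. - h0 + x) ` H)"
      by (intro imageI) simp
    then have "h0 + q \<in> affine hull H"
      by (subst affine_hull_span_gen[OF h0H])
    moreover have "h0 + q \<in> cball h0 e"
      using that(2) by (simp add: dist_norm)
    ultimately show ?thesis using e by blast
  qed
  have "norm (s *\<^sub>R p) \<le> e"
    using \<open>norm p + 1 > 0\<close> \<open>e > 0\<close> by (simp add: s_def field_simps)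
  then have "h0 + s *\<^sub>R p \<in> H" "h0 + - (s *\<^sub>R p) \<in> H"
    using p by (intro move span_mul span_neg; simp)+
  from this[THEN le] have "s * (f \<bullet> p) \<le> 0" "- (s * (f \<bullet> p)) \<le> 0"
    by (simp_all add: inner_add_right inner_diff_right)
  then show ?thesis using \<open>s > 0\<close> by (simp add: mult_le_0_iff zero_le_mult_iff)
qed

lemma lp_argmin_feasible_direction_pos:
  fixes S :: "'a::euclidean_space set"
  assumes "finite I" and S: "S = {x. \<forall>i\<in>I. a i \<bullet> x \<le> b i}" and h0: "h0 \<in> lp_argmin S v"
    and active: "\<And>i. i \<in> I \<Longrightarrow> a i \<bullet> h0 = b i \<Longrightarrow> a i \<bullet> q \<le> 0"
    and q: "q \<notin> span ((\<lambda>h. h - h0) ` lp_argmin S v)"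
  shows "0 < v \<bullet> q"
proof -
  have "\<forall>i\<in>I. a i \<bullet> h0 \<le> b i"
    using h0 S by (simp add: lp_argmin_def)
  then have "\<exists>s>0. \<forall>i\<in>I. a i \<bullet> (h0 + s *\<^sub>R q) \<le> b i"
    using active by (rule feasible_direction_of_active_constraints[OF \<open>finite I\<close>])
  then obtain s where "s > 0" and hs: "h0 + s *\<^sub>R q \<in> S"
    using S by blast
  have v_h0: "v \<bullet> h0 \<le> v \<bullet> y" if "y \<in> S" for y
    using h0 that by (simp add: lp_argmin_def)
  have "0 \<le> v \<bullet> q"
    using v_h0[OF hs] \<open>s > 0\<close> by (simp add: inner_add_right zero_le_mult_iff)
  moreover have "v \<bullet> q \<noteq> 0"
  proof
    assume "v \<bullet> q = 0"
    with hs v_h0 have "h0 + s *\<^sub>R q \<in> lp_argmin S v"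
      by (simp add: lp_argmin_def inner_add_right)
    then have "(h0 + s *\<^sub>R q) - h0 \<in> span ((\<lambda>h. h - h0) ` lp_argmin S v)"
      by (intro span_base imageI)
    then have "s *\<^sub>R q \<in> span ((\<lambda>h. h - h0) ` lp_argmin S v)"
      by simp
    then have "(1 / s) *\<^sub>R (s *\<^sub>R q) \<in> span ((\<lambda>h. h - h0) ` lp_argmin S v)"
      by (rule span_mul)
    with \<open>s > 0\<close> q show False
      by simp
  qed
  ultimately show ?thesis by simp
qed

text \<open>Weak sharpness: q is the component of y - h0 orthogonal to the minimiser set.\<close>

lemma lp_argmin_weak_sharp:
  fixes S :: "'a::euclidean_space set"
  assumes "polyhedron S" and h0: "h0 \<in> rel_interior (lp_argmin S v)"
  obtains \<kappa> where "\<kappa> > 0"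
    "\<And>y q. y \<in> S \<Longrightarrow> y - h0 - q \<in> span ((\<lambda>h. h - h0) ` lp_argmin S v) \<Longrightarrow>
       (\<And>p. p \<in> span ((\<lambda>h. h - h0) ` lp_argmin S v) \<Longrightarrow> orthogonal q p) \<Longrightarrow>
       \<kappa> * norm q \<le> v \<bullet> (y - h0)"
proof -
  let ?H = "lp_argmin S v"
  define D where "D = span ((\<lambda>h. h - h0) ` ?H)"
  obtain I :: "'a set set" and a b where "finite I" and S: "S = {x. \<forall>i\<in>I. a i \<bullet> x \<le> b i}"
    by (rule polyhedron_obtain_constraints[OF \<open>polyhedron S\<close>])
  have h0H: "h0 \<in> ?H"
    using h0 rel_interior_subset by blast
  have D_v: "v \<bullet> p = 0" if "p \<in> D" for p
    using rel_interior_inner_span_eq_0[OF h0 _ that[unfolded D_def]] h0H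
    by (simp add: lp_argmin_def)
  have D_active: "a i \<bullet> p = 0" if "p \<in> D" "i \<in> I" "a i \<bullet> h0 = b i" for p i
    using rel_interior_inner_span_eq_0[OF h0 _ that(1)[unfolded D_def], of "a i"] that(2,3) S
    by (simp add: lp_argmin_def)
  define K where
    "K = (\<Inter>i\<in>{i\<in>I. a i \<bullet> h0 = b i}. {q. a i \<bullet> q \<le> 0}) \<inter> (\<Inter>p\<in>D. {q. p \<bullet> q = 0})"
  have "closed K"
    unfolding K_def by (intro closed_Int closed_INT ballI closed_halfspace_le closed_hyperplane)
  moreover have "conic K"
    unfolding conic_def K_def by (auto intro: mult_nonneg_nonpos)
  moreover have "0 < v \<bullet> q" if "q \<in> K" "q \<noteq> 0" for q
  proof (rule lp_argmin_feasible_direction_pos[OF \<open>finite I\<close> S h0H])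
    show "a i \<bullet> q \<le> 0" if "i \<in> I" "a i \<bullet> h0 = b i" for i
      using \<open>q \<in> K\<close> that by (simp add: K_def)
    show "q \<notin> span ((\<lambda>h. h - h0) ` ?H)"
      using that by (auto simp: K_def D_def)
  qed
  ultimately obtain \<kappa> where "\<kappa> > 0" and \<kappa>: "\<And>q. q \<in> K \<Longrightarrow> \<kappa> * norm q \<le> v \<bullet> q"
    using conic_closed_linear_lower_bound[of K v] by blast
  show ?thesis
  proof (rule that[OF \<open>\<kappa> > 0\<close>])
    fix y q
    assume y: "y \<in> S" and p: "y - h0 - q \<in> span ((\<lambda>h. h - h0) ` ?H)"
      and q: "\<And>p. p \<in> span ((\<lambda>h. h - h0) ` ?H) \<Longrightarrow> orthogonal q p"
    have "a i \<bullet> q \<le> 0" if "i \<in> I" "a i \<bullet> h0 = b i" for i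
    proof -
      have "a i \<bullet> (y - h0 - q) = 0"
        using D_active p that D_def by blast
      with y S that show ?thesis
        by (auto simp: inner_diff_right)
    qed
    with q have "q \<in> K"
      by (simp add: K_def D_def orthogonal_def inner_commute)
    moreover have "v \<bullet> (y - h0) = v \<bullet> q"
      using D_v[of "y - h0 - q"] p by (simp add: D_def inner_diff_right)
    ultimately show "\<kappa> * norm q \<le> v \<bullet> (y - h0)"
      using \<kappa> by simp
  qed
qed

lemma lp_argmin_stable_under_orthogonal_perturbation:
  fixes S :: "'a::euclidean_space set"
  assumes "polyhedron S" "lp_argmin S v \<noteq> {}"
  obtains \<kappa> where "\<kappa> > 0"
    "\<And>u. (\<And>h1 h2. h1 \<in> lp_argmin S v \<Longrightarrow> h2 \<in> lp_argmin S v \<Longrightarrow> u \<bullet> (h1 - h2) = 0) \<Longrightarrow>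
       norm u < \<kappa> \<Longrightarrow> lp_argmin S v \<subseteq> lp_argmin S (v + u)"
proof -
  let ?H = "lp_argmin S v"
  have "convex ?H"
    using assms(1) by (simp add: convex_lp_argmin polyhedron_imp_convex)
  then obtain h0 where h0: "h0 \<in> rel_interior ?H"
    using assms(2) rel_interior_eq_empty by blast
  then have h0H: "h0 \<in> ?H"
    using rel_interior_subset by blast
  obtain \<kappa> where "\<kappa> > 0" and sharp:
    "\<And>y q. y \<in> S \<Longrightarrow> y - h0 - q \<in> span ((\<lambda>h. h - h0) ` ?H) \<Longrightarrow>
       (\<And>p. p \<in> span ((\<lambda>h. h - h0) ` ?H) \<Longrightarrow> orthogonal q p) \<Longrightarrow> \<kappa> * norm q \<le> v \<bullet> (y - h0)"
    using lp_argmin_weak_sharp[OF assms(1) h0] by blast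
  show ?thesis
  proof (rule that[OF \<open>\<kappa> > 0\<close>], rule subsetI)
    fix u h
    assume orth: "\<And>h1 h2. h1 \<in> ?H \<Longrightarrow> h2 \<in> ?H \<Longrightarrow> u \<bullet> (h1 - h2) = 0"
      and "norm u < \<kappa>" and h: "h \<in> ?H"
    have "(v + u) \<bullet> h \<le> (v + u) \<bullet> y" if y: "y \<in> S" for y
    proof -
      obtain p q where p: "p \<in> span ((\<lambda>h. h - h0) ` ?H)"
        and q: "\<And>w. w \<in> span ((\<lambda>h. h - h0) ` ?H) \<Longrightarrow> orthogonal q w" and yq: "y - h0 = p + q"
        using orthogonal_subspace_decomp_exists by metis
      have "orthogonal u p"
        by (rule orthogonal_to_span[OF p]) (auto simp: orthogonal_def orth h0H)
      have "v \<bullet> h = v \<bullet> h0"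
        using h h0H by (auto simp: lp_argmin_def intro: antisym)
      moreover have "u \<bullet> h = u \<bullet> h0"
        using orth[OF h h0H] by (simp add: inner_diff_right)
      moreover have "\<kappa> * norm q \<le> v \<bullet> (y - h0)"
        using sharp[OF y _ q] p yq by simp
      moreover have "\<bar>u \<bullet> q\<bar> \<le> \<kappa> * norm q"
        using Cauchy_Schwarz_ineq2[of u q] \<open>norm u < \<kappa>\<close>
        by (meson mult_right_mono norm_ge_zero order_trans less_imp_le)
      moreover have "u \<bullet> (y - h0) = u \<bullet> q"
        using \<open>orthogonal u p\<close> yq by (simp add: orthogonal_def inner_add_right)
      ultimately show ?thesis
        by (simp add: inner_add_left inner_diff_right)
    qed
    with h show "h \<in> lp_argmin S (v + u)"
      by (simp add: lp_argmin_def)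
  qed
qed


section \<open>Non-vertical faces of the epigraph of the negated optimal value\<close>

locale parametric_lp_face =
  fixes P :: "('a::euclidean_space \<times> 'b::euclidean_space) set" and c :: 'b
    and F :: "('a \<times> real) set"
  assumes polyhedron: "polyhedron P"
    and face: "F face_of {(t, z). t \<in> {t. lp_argmin P (t, c) \<noteq> {}} \<and> - lp_min P (t, c) \<le> z}"
    and nonempty: "F \<noteq> {}"
    and nonvertical: "(0, 1) \<notin> aff_dir F"
begin

abbreviation "opt t \<equiv> lp_argmin P (t, c)"
abbreviation "val t \<equiv> lp_min P (t, c)"
abbreviation "epi \<equiv> {(t, z). t \<in> {t. opt t \<noteq> {}} \<and> - val t \<le> z}"
abbreviation "T \<equiv> fst ` F"

lemma face_on_graph: "(t, z) \<in> F \<Longrightarrow> opt t \<noteq> {} \<and> z = - val t"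
  using nonvertical_face_of_epigraph[OF face nonvertical] by blast

lemma graph_in_face: "t \<in> T \<Longrightarrow> (t, - val t) \<in> F"
  using face_on_graph by force

lemma opt_nonempty: "t \<in> T \<Longrightarrow> opt t \<noteq> {}"
  using face_on_graph by force

lemma convex_T: "convex T"
  using face_of_imp_convex[OF face] by (intro convex_linear_image linear_fst)

lemma val_affine:
  assumes "t1 \<in> T" "t2 \<in> T" "0 \<le> l" "l \<le> 1"
  shows "val (l *\<^sub>R t1 + (1 - l) *\<^sub>R t2) = l * val t1 + (1 - l) * val t2"
proof -
  have "l *\<^sub>R (t1, - val t1) + (1 - l) *\<^sub>R (t2, - val t2) \<in> F"
    using face_of_imp_convex[OF face] graph_in_face assms by (intro convexD) auto
  then have "(l *\<^sub>R t1 + (1 - l) *\<^sub>R t2, - (l * val t1 + (1 - l) * val t2)) \<in> F"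
    by (simp add: algebra_simps)
  then show ?thesis
    using face_on_graph by force
qed

lemma opt_rel_interior_subset:
  assumes t0: "t0 \<in> rel_interior T" and "t \<in> T"
  shows "opt t0 \<subseteq> opt t"
proof
  fix h assume h: "h \<in> opt t0"
  obtain e where "e > 1" and "(1 - e) *\<^sub>R t + e *\<^sub>R t0 \<in> T"
    using convex_rel_interior_if2[OF convex_T t0] hull_inc[OF \<open>t \<in> T\<close>] by blast
  define t' where "t' = (1 - e) *\<^sub>R t + e *\<^sub>R t0"
  define l where "l = 1 / e"
  have "t' \<in> T"
    using \<open>(1 - e) *\<^sub>R t + e *\<^sub>R t0 \<in> T\<close> by (simp add: t'_def)
  have "0 < l" "l < 1"
    using \<open>e > 1\<close> by (simp_all add: l_def)
  have t0_eq: "l *\<^sub>R t' + (1 - l) *\<^sub>R t = t0"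
    using \<open>e > 1\<close> by (simp add: t'_def l_def algebra_simps)
  have "l *\<^sub>R (t', c) + (1 - l) *\<^sub>R (t, c) = (t0, c)"
    using t0_eq by (simp add: algebra_simps)
  moreover have "val t0 = l * val t' + (1 - l) * val t"
    using val_affine[OF \<open>t' \<in> T\<close> \<open>t \<in> T\<close>, of l] \<open>0 < l\<close> \<open>l < 1\<close>
    unfolding t0_eq by simp
  ultimately show "h \<in> opt t"
    using lp_argmin_of_convex_combination[OF \<open>0 < l\<close> \<open>l < 1\<close>, of h P "(t', c)" "(t, c)"] h
      opt_nonempty[OF \<open>t' \<in> T\<close>] opt_nonempty[OF \<open>t \<in> T\<close>] by simp
qed

lemma val_diff:
  assumes "w \<in> fst ` opt t1" "w \<in> fst ` opt t2"
  shows "val t1 - val t2 = (t1 - t2) \<bullet> w"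
proof -
  obtain y1 y2 where "(w, y1) \<in> opt t1" "(w, y2) \<in> opt t2"
    using assms by force
  then show ?thesis
    by (rule lp_min_diff_of_common_component)
qed

lemma mem_T_if_common_opt:
  assumes "t0 \<in> T" "h \<in> opt t0" "h \<in> opt (t0 + u)" "h \<in> opt (t0 - u)"
  shows "t0 + u \<in> T"
proof (cases "u = 0")
  case False
  have val_pm: "val (t0 + u) = val t0 + u \<bullet> fst h" "val (t0 - u) = val t0 - u \<bullet> fst h"
    using val_diff[of "fst h" "t0 + u" t0] val_diff[of "fst h" "t0 - u" t0] assms(2-4)
    by (auto simp: inner_minus_left)
  define a where "a = (t0 + u, - val (t0 + u))"
  define b where "b = (t0 - u, - val (t0 - u))"
  have "a \<in> epi" "b \<in> epi"
    using assms(3,4) by (auto simp: a_def b_def)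
  moreover have "(t0, - val t0) \<in> open_segment a b"
  proof -
    have "midpoint a b = (t0, - val t0)"
      using val_pm by (simp add: a_def b_def midpoint_def scaleR_2[symmetric] algebra_simps)
    moreover have "fst a - fst b = 2 *\<^sub>R u"
      by (simp add: a_def b_def scaleR_2)
    then have "a \<noteq> b"
      using False by auto
    ultimately show ?thesis
      using midpoint_in_open_segment by metis
  qed
  ultimately have "a \<in> F"
    using face graph_in_face[OF assms(1)] unfolding face_of_def by blast
  then show ?thesis
    by (force simp: a_def)
qed (use assms in simp)

lemma T_contains_orthogonal_ball:
  assumes "t0 \<in> T" "g0 \<in> fst ` opt t0"
  obtains \<kappa> where "\<kappa> > 0"
    "\<And>u. (\<And>g. g \<in> fst ` opt t0 \<Longrightarrow> u \<bullet> (g - g0) = 0) \<Longrightarrow> norm u < \<kappa> \<Longrightarrow> t0 + u \<in> T"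
proof -
  obtain \<kappa> where "\<kappa> > 0" and stable:
    "\<And>v. (\<And>h1 h2. h1 \<in> opt t0 \<Longrightarrow> h2 \<in> opt t0 \<Longrightarrow> v \<bullet> (h1 - h2) = 0) \<Longrightarrow>
       norm v < \<kappa> \<Longrightarrow> opt t0 \<subseteq> lp_argmin P ((t0, c) + v)"
    using lp_argmin_stable_under_orthogonal_perturbation[OF polyhedron opt_nonempty[OF assms(1)]]
    by blast
  have opt_shift: "opt t0 \<subseteq> opt (t0 + u)"
    if orth: "\<And>g. g \<in> fst ` opt t0 \<Longrightarrow> u \<bullet> (g - g0) = 0" and "norm u < \<kappa>" for u
  proof -
    have "(u, 0) \<bullet> (h1 - h2) = 0" if "h1 \<in> opt t0" "h2 \<in> opt t0" for h1 h2
      using orth[of "fst h1"] orth[of "fst h2"] that by (simp add: inner_prod_def inner_diff_right)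
    then have "opt t0 \<subseteq> lp_argmin P ((t0, c) + (u, 0))"
      using \<open>norm u < \<kappa>\<close> by (intro stable) (simp_all add: norm_Pair)
    then show ?thesis by simp
  qed
  obtain h where h: "h \<in> opt t0"
    using assms(2) by blast
  show ?thesis
  proof (rule that[OF \<open>\<kappa> > 0\<close>])
    fix u
    assume "\<And>g. g \<in> fst ` opt t0 \<Longrightarrow> u \<bullet> (g - g0) = 0" and "norm u < \<kappa>"
    then have "h \<in> opt (t0 + u)" "h \<in> opt (t0 - u)"
      using opt_shift[of u] opt_shift[of "- u"] h by (auto simp: inner_minus_left)
    then show "t0 + u \<in> T"
      by (rule mem_T_if_common_opt[OF assms(1) h])
  qed
qed

theorem aff_dim_add_aff_dim_common_opt:
  "aff_dim T + aff_dim (\<Inter>t\<in>T. fst ` opt t) = DIM('a)"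
proof -
  obtain t0 where t0: "t0 \<in> rel_interior T"
    using rel_interior_eq_empty convex_T nonempty by blast
  then have "t0 \<in> T"
    using rel_interior_subset by blast
  have common: "(\<Inter>t\<in>T. fst ` opt t) = fst ` opt t0"
    using opt_rel_interior_subset[OF t0] \<open>t0 \<in> T\<close> by blast
  obtain g0 where g0: "g0 \<in> fst ` opt t0"
    using opt_nonempty[OF \<open>t0 \<in> T\<close>] by blast
  have "(t - t0) \<bullet> (g - g0) = 0" if "t \<in> T" "g \<in> fst ` opt t0" for t g
  proof -
    have "g \<in> fst ` opt t" "g0 \<in> fst ` opt t"
      using opt_rel_interior_subset[OF t0 \<open>t \<in> T\<close>] that(2) g0 by blast+
    then show ?thesis
      using val_diff[of g t t0] val_diff[of g0 t t0] that(2) g0 by (simp add: inner_diff_right)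
  qed
  moreover obtain \<kappa> where "\<kappa> > 0"
    "\<And>u. (\<And>g. g \<in> fst ` opt t0 \<Longrightarrow> u \<bullet> (g - g0) = 0) \<Longrightarrow> norm u < \<kappa> \<Longrightarrow> t0 + u \<in> T"
    using T_contains_orthogonal_ball[OF \<open>t0 \<in> T\<close> g0] by blast
  ultimately show ?thesis
    unfolding common by (rule aff_dim_add_aff_dim_orthogonal[OF \<open>t0 \<in> T\<close> g0])
qed

end


section \<open>The network pricing problem\<close>

text \<open>Flows as vectors, so that the feasible set is a polyhedron in a Euclidean space.\<close>

definition feasWX_vec :: "(('k + 'u) \<Rightarrow> 'v) \<Rightarrow> (('k + 'u) \<Rightarrow> 'v) \<Rightarrow> 'v \<Rightarrow> 'v \<Rightarrow>
    ((real ^ ('k::finite)) \<times> (real ^ ('k + 'u::finite))) set" where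
  "feasWX_vec tailf headf o' d = {(w, x). (w, vec_nth x) \<in> feasWX tailf headf o' d}"

lemma mem_feasWX_vec_iff:
  "(w, vec_lambda x) \<in> feasWX_vec tailf headf o' d \<longleftrightarrow> (w, x) \<in> feasWX tailf headf o' d"
  by (simp add: feasWX_vec_def vec_lambda_inverse)

lemma costc_eq_inner: "costc c x = vec_lambda c \<bullet> vec_lambda x"
  by (simp add: costc_def inner_vec_def)

lemma inner_cost_toll: "(t, vec_lambda c) \<bullet> (w, vec_lambda x) = costc c x + t \<bullet> w"
  by (simp add: costc_eq_inner)

lemma incid_eq_inner:
  "incid tailf headf x i = (\<chi> a. of_bool (tailf a = i) - of_bool (headf a = i)) \<bullet> vec_lambda x"
  by (simp add: incid_def inner_vec_def left_diff_distrib sum_subtractf sum.inter_filter[symmetric]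
      of_bool_def if_distrib[of "\<lambda>z. z * _"] cong: if_cong)

lemma polyhedron_feasWX_vec:
  fixes tailf headf :: "('k::finite + 'u::finite) \<Rightarrow> 'v::finite"
  shows "polyhedron (feasWX_vec tailf headf o' d)"
proof -
  have eq: "feasWX_vec tailf headf o' d =
      (\<Inter>k. {p. (- axis k 1, axis (Inl k) 1) \<bullet> p \<le> 0}) \<inter>
      (\<Inter>i. {p. (0, \<chi> a. of_bool (tailf a = i) - of_bool (headf a = i)) \<bullet> p = node_supply o' d i}) \<inter>
      (\<Inter>a. {p. (0, - axis a 1) \<bullet> p \<le> 0}) \<inter> (\<Inter>k. {p. (- axis k 1, 0) \<bullet> p \<le> 0})"
    by (auto simp: feasWX_vec_def feasWX_def flows_def incid_eq_inner inner_axis' inner_prod_def)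
  show ?thesis
    unfolding eq
    by (intro polyhedron_Int polyhedron_Inter)
      (auto intro: polyhedron_halfspace_le polyhedron_hyperplane)
qed

lemma flows_nonempty:
  fixes tailf headf :: "('k::finite + 'u::finite) \<Rightarrow> 'v"
  assumes "o' \<noteq> d" and "(o', d) \<in> {(tailf (Inr u), headf (Inr u)) | u. True}\<^sup>*"
  shows "flows tailf headf o' d \<noteq> {}"
proof -
  have "\<exists>x. (\<forall>a. 0 \<le> x a) \<and> (\<forall>i. incid tailf headf x i = of_bool (i = o') - of_bool (i = j))"
    if "(o', j) \<in> {(tailf (Inr u), headf (Inr u)) | u. True}\<^sup>*" for j
    using that
  proof (induction rule: rtrancl_induct)
    case base
    show ?case
      by (intro exI[of _ "\<lambda>_. 0"]) (simp add: incid_def)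
  next
    case (step j j')
    then obtain x where x: "\<forall>a. 0 \<le> x a"
      "\<forall>i. incid tailf headf x i = of_bool (i = o') - of_bool (i = j)"
      by blast
    obtain u where u: "j = tailf (Inr u)" "j' = headf (Inr u)"
      using step(2) by blast
    define y where "y = (\<lambda>a. x a + of_bool (a = Inr u))"
    have "incid tailf headf y i =
        incid tailf headf x i + (of_bool (tailf (Inr u) = i) - of_bool (headf (Inr u) = i))" for i
      by (simp add: y_def incid_def sum.distrib of_bool_def)
    then have "incid tailf headf y i = of_bool (i = o') - of_bool (i = j')" for i
      using x(2) u by auto
    moreover have "\<forall>a. 0 \<le> y a"
      using x(1) by (simp add: y_def)
    ultimately show ?case by blast
  qed
  then obtain x where "\<forall>a. 0 \<le> x a" "\<forall>i. incid tailf headf x i = of_bool (i = o') - of_bool (i = d)"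
    using assms(2) by blast
  with \<open>o' \<noteq> d\<close> have "x \<in> flows tailf headf o' d"
    by (simp add: flows_def node_supply_def)
  then show ?thesis by blast
qed

lemma ball_feasWX_vec:
  "(\<forall>p\<in>feasWX_vec tailf headf o' d. P p) \<longleftrightarrow> (\<forall>(w, x) \<in> feasWX tailf headf o' d. P (w, vec_lambda x))"
proof
  assume "\<forall>(w, x) \<in> feasWX tailf headf o' d. P (w, vec_lambda x)"
  then show "\<forall>p\<in>feasWX_vec tailf headf o' d. P p"
    by (auto simp: feasWX_vec_def)
qed (auto simp: mem_feasWX_vec_iff[symmetric])

lemma mem_lp_argmin_feasWX_vec_iff:
  "(w, vec_lambda x) \<in> lp_argmin (feasWX_vec tailf headf o' d) (t, vec_lambda c) \<longleftrightarrow>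
     (w, x) \<in> feasWX tailf headf o' d \<and>
     (\<forall>(w', x') \<in> feasWX tailf headf o' d. costc c x + t \<bullet> w \<le> costc c x' + t \<bullet> w')"
  unfolding lp_argmin_def ball_feasWX_vec mem_Collect_eq mem_feasWX_vec_iff inner_cost_toll ..

lemma Wset_eq_fst_lp_argmin:
  "Wset tailf headf o' d c t = fst ` lp_argmin (feasWX_vec tailf headf o' d) (t, vec_lambda c)"
    (is "_ = fst ` ?A")
proof (intro set_eqI iffI)
  fix w assume "w \<in> Wset tailf headf o' d c t"
  then obtain x where "(w, vec_lambda x) \<in> ?A"
    unfolding Wset_def mem_lp_argmin_feasWX_vec_iff by blast
  then show "w \<in> fst ` ?A"
    by force
next
  fix w assume "w \<in> fst ` ?A"
  then obtain x where "(w, vec_lambda (vec_nth x)) \<in> ?A"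
    by (auto simp: vec_nth_inverse)
  then show "w \<in> Wset tailf headf o' d c t"
    unfolding Wset_def mem_lp_argmin_feasWX_vec_iff by blast
qed

context
  fixes tailf headf :: "('k::finite + 'u::finite) \<Rightarrow> 'v::finite"
    and c :: "('k + 'u) \<Rightarrow> real" and o' d :: 'v
  assumes c_nonneg: "\<forall>a. 0 \<le> c a" and flows: "flows tailf headf o' d \<noteq> {}"
begin

lemma lp_argmin_feasWX_vec_nonempty_iff:
  "lp_argmin (feasWX_vec tailf headf o' d) (t, vec_lambda c) \<noteq> {} \<longleftrightarrow> (\<forall>k. 0 \<le> t $ k)"
proof
  assume "lp_argmin (feasWX_vec tailf headf o' d) (t, vec_lambda c) \<noteq> {}"
  then obtain w x where opt: "(w, x) \<in> lp_argmin (feasWX_vec tailf headf o' d) (t, vec_lambda c)"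
    by auto
  show "\<forall>k. 0 \<le> t $ k"
  proof
    fix k
    have "(w + axis k 1, x) \<in> feasWX_vec tailf headf o' d"
      using opt
      by (auto simp: lp_argmin_def feasWX_vec_def feasWX_def axis_def intro: add_increasing2)
    with opt have "(t, vec_lambda c) \<bullet> (w, x) \<le> (t, vec_lambda c) \<bullet> (w + axis k 1, x)"
      unfolding lp_argmin_def by blast
    then show "0 \<le> t $ k"
      by (simp add: inner_add_right inner_axis)
  qed
next
  assume t: "\<forall>k. 0 \<le> t $ k"
  obtain x where "x \<in> flows tailf headf o' d"
    using flows by blast
  then have "((\<chi> k. x (Inl k)), vec_lambda x) \<in> feasWX_vec tailf headf o' d"
    by (auto simp: mem_feasWX_vec_iff feasWX_def flows_def)
  moreover have "0 \<le> (t, vec_lambda c) \<bullet> p" if "p \<in> feasWX_vec tailf headf o' d" for p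
    using that t c_nonneg
    by (auto simp: feasWX_vec_def feasWX_def flows_def inner_vec_def
        intro!: add_nonneg_nonneg sum_nonneg)
  ultimately show "lp_argmin (feasWX_vec tailf headf o' d) (t, vec_lambda c) \<noteq> {}"
    using polyhedron_lp_argmin_nonempty[OF polyhedron_feasWX_vec] by blast
qed

lemma fval_eq_lp_min:
  assumes t: "\<forall>k. 0 \<le> t $ k"
  shows "fval tailf headf o' d c t = ereal (lp_min (feasWX_vec tailf headf o' d) (t, vec_lambda c))"
proof -
  let ?Q = "feasWX_vec tailf headf o' d" and ?v = "(t, vec_lambda c)"
  let ?flowcost = "{ereal (costc c x + tollc t x) | x. x \<in> flows tailf headf o' d}"
  have toll: "tollc t x = t \<bullet> (\<chi> k. x (Inl k))" for x
    by (simp add: tollc_def inner_vec_def)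
  obtain w0 x0 where opt: "(w0, vec_lambda x0) \<in> lp_argmin ?Q ?v"
    using lp_argmin_feasWX_vec_nonempty_iff t by (metis ex_in_conv prod.collapse vec_lambda_eta)
  then have x0: "x0 \<in> flows tailf headf o' d" "\<forall>k. x0 (Inl k) \<le> w0 $ k"
    by (auto simp: lp_argmin_def mem_feasWX_vec_iff feasWX_def)
  have "Inf ?flowcost \<le> ereal (lp_min ?Q ?v)"
  proof -
    have "tollc t x0 \<le> t \<bullet> w0"
      using t x0(2) by (auto simp: tollc_def inner_vec_def intro!: sum_mono mult_left_mono)
    then have "costc c x0 + tollc t x0 \<le> lp_min ?Q ?v"
      using lp_min_eq[OF opt] by (simp add: costc_eq_inner)
    then show ?thesis
      using x0(1) by (intro Inf_lower2[of "ereal (costc c x0 + tollc t x0)"]) auto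
  qed
  moreover have "ereal (lp_min ?Q ?v) \<le> Inf ?flowcost"
  proof (rule Inf_greatest, clarify)
    fix x assume "x \<in> flows tailf headf o' d"
    then have "((\<chi> k. x (Inl k)), vec_lambda x) \<in> ?Q"
      by (auto simp: mem_feasWX_vec_iff feasWX_def flows_def)
    then have "lp_min ?Q ?v \<le> ?v \<bullet> ((\<chi> k. x (Inl k)), vec_lambda x)"
      using lp_min_le opt by blast
    also have "\<dots> = costc c x + tollc t x"
      by (simp only: inner_cost_toll toll)
    finally show "ereal (lp_min ?Q ?v) \<le> ereal (costc c x + tollc t x)"
      by simp
  qed
  ultimately show ?thesis
    using t by (simp add: fval_def)
qed

lemma epi_negf_eq:
  "epi_negf tailf headf o' d c =
     {(t, z). t \<in> {t. lp_argmin (feasWX_vec tailf headf o' d) (t, vec_lambda c) \<noteq> {}} \<and>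
              - lp_min (feasWX_vec tailf headf o' d) (t, vec_lambda c) \<le> z}"
proof -
  have "(t, z) \<in> epi_negf tailf headf o' d c \<longleftrightarrow>
      (\<forall>k. 0 \<le> t $ k) \<and> - lp_min (feasWX_vec tailf headf o' d) (t, vec_lambda c) \<le> z" for t z
  proof (cases "\<forall>k. 0 \<le> t $ k")
    case True
    then show ?thesis by (simp add: epi_negf_def fval_eq_lp_min)
  next
    case False
    then show ?thesis by (auto simp: epi_negf_def fval_def)
  qed
  then show ?thesis
    by (auto simp: lp_argmin_feasWX_vec_nonempty_iff)
qed

end

theorem theorem2:
  fixes tailf headf :: "('k::finite + 'u::finite) \<Rightarrow> 'v::finite"
    and c :: "('k + 'u) \<Rightarrow> real"
    and o' d :: 'v
    and T :: "(real ^ 'k) set"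
  assumes c_nonneg: "\<forall>a. 0 \<le> c a"
    and od: "o' \<noteq> d"
    and toll_free_path: "(o', d) \<in> {(tailf (Inr u), headf (Inr u)) | u. True}\<^sup>*"
    and act: "action_set tailf headf o' d c T"
  shows "aff_dim T + aff_dim (\<Inter>t\<in>T. Wset tailf headf o' d c t) = int CARD('k)"
proof -
  obtain F where F: "F face_of epi_negf tailf headf o' d c" "F \<noteq> {}" "(0, 1) \<notin> aff_dir F"
    and T: "T = fst ` F"
    using act unfolding action_set_def by blast
  note epi = epi_negf_eq[OF c_nonneg flows_nonempty[OF od toll_free_path]]
  interpret parametric_lp_face "feasWX_vec tailf headf o' d" "vec_lambda c" F
    using F(1)[unfolded epi] F(2,3) polyhedron_feasWX_vec by unfold_locales
  show ?thesis
    using aff_dim_add_aff_dim_common_opt by (simp add: T Wset_eq_fst_lp_argmin)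
qed

end
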